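(* Let $\Sigma$ be a finite set of denial constraints, $D$ a nonempty instance, and $0<\epsilon<1$ such that $\epsilon|D|$ is an integer. Let $D_k$ be a set of $\epsilon|D|$ tuples disjoint from $D$, and $D'=D\cup D_k$. Then $$\mathit{inc\text{-}deg}^{c,g_3}(D',\Sigma)\le \mathit{inc\text{-}deg}^{c,g_3}(D,\Sigma)+\frac{1}{1+\frac{1}{\epsilon}} \quad\text{and}\quad \mathit{inc\text{-}deg}^{c,g_3}(D,\Sigma)\le \frac{1}{1-\epsilon}\,\mathit{inc\text{-}deg}^{c,g_3}(D',\Sigma).$$
   Context: A database instance is a finite set of ground atoms (tuples). A denial constraint (DC) is a sentence $\neg\exists\bar x\,(P_1(\bar x_1)\wedge\dots\wedge P_m(\bar x_m)\wedge\varphi)$ with the $P_i$ schema predicates and $\varphi$ a possibly empty conjunction of built-in comparisons. A subset-repair (S-repair) of $D$ wrt. $\Sigma$ is a $\subseteq$-maximal subset $D'\subseteq D$ that satisfies $\Sigma$; a cardinality-repair (C-repair) is an S-repair of maximum cardinality; $\mathit{Crep}(D,\Sigma)$ is the set of C-repairs. For nonempty $D$, $$\mathit{inc\text{-}deg}^{c,g_3}(D,\Sigma)=\frac{|D|-\max\{|D'| : D'\in \mathit{Crep}(D,\Sigma)\}}{|D|}.$$ *)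

theory Defs
  imports Main "HOL-Library.Extended_Nat"
begin

text \<open>Ground atoms: a predicate name together with a tuple of constants.
  A database instance is a finite set of ground atoms.\<close>
type_synonym 'v atom = "string \<times> 'v list"

datatype 'v dterm = Var nat | Const 'v

datatype cmp = Eq | Neq | Lt | Le | Gt | Ge

text \<open>A denial constraint  not exists x. P1(x1) and ... and Pm(xm) and phi:
  a list of relational atoms (the body) and a list of built-in comparisons (phi).\<close>
datatype 'v dc = DC (dc_body: "(string \<times> 'v dterm list) list")
                    (dc_cmps: "('v dterm \<times> cmp \<times> 'v dterm) list")

definition is_dc :: "'v dc \<Rightarrow> bool" where
  "is_dc \<sigma> \<longleftrightarrow> dc_body \<sigma> \<noteq> []"

fun eval_term :: "(nat \<Rightarrow> 'v) \<Rightarrow> 'v dterm \<Rightarrow> 'v" where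
  "eval_term \<nu> (Var i) = \<nu> i"
| "eval_term \<nu> (Const c) = c"

fun eval_cmp :: "cmp \<Rightarrow> 'v::linorder \<Rightarrow> 'v \<Rightarrow> bool" where
  "eval_cmp Eq a b = (a = b)"
| "eval_cmp Neq a b = (a \<noteq> b)"
| "eval_cmp Lt a b = (a < b)"
| "eval_cmp Le a b = (a \<le> b)"
| "eval_cmp Gt a b = (a > b)"
| "eval_cmp Ge a b = (a \<ge> b)"

definition violates :: "'v::linorder atom set \<Rightarrow> 'v dc \<Rightarrow> bool" where
  "violates D \<sigma> \<longleftrightarrow> (\<exists>\<nu>.
      (\<forall>(P, ts) \<in> set (dc_body \<sigma>). (P, map (eval_term \<nu>) ts) \<in> D) \<and>
      (\<forall>(s, c, t) \<in> set (dc_cmps \<sigma>). eval_cmp c (eval_term \<nu> s) (eval_term \<nu> t)))"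

definition satisfies :: "'v::linorder atom set \<Rightarrow> 'v dc set \<Rightarrow> bool" where
  "satisfies D \<Sigma> \<longleftrightarrow> (\<forall>\<sigma> \<in> \<Sigma>. \<not> violates D \<sigma>)"

definition is_srepair :: "'v::linorder atom set \<Rightarrow> 'v dc set \<Rightarrow> 'v atom set \<Rightarrow> bool" where
  "is_srepair D \<Sigma> D' \<longleftrightarrow> D' \<subseteq> D \<and> satisfies D' \<Sigma> \<and>
      (\<forall>D''. D' \<subset> D'' \<and> D'' \<subseteq> D \<longrightarrow> \<not> satisfies D'' \<Sigma>)"

definition Crep :: "'v::linorder atom set \<Rightarrow> 'v dc set \<Rightarrow> 'v atom set set" where
  "Crep D \<Sigma> = {D'. is_srepair D \<Sigma> D' \<and>
      (\<forall>D''. is_srepair D \<Sigma> D'' \<longrightarrow> card D'' \<le> card D')}"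

definition inc_deg_c_g3 :: "'v::linorder atom set \<Rightarrow> 'v dc set \<Rightarrow> real" where
  "inc_deg_c_g3 D \<Sigma> =
     (real (card D) - real (Max (card ` Crep D \<Sigma>))) / real (card D)"

end

theory Submission
  imports Defs
begin

text \<open>Adding \<open>k\<close> tuples to \<open>n\<close> tuples can only enlarge the largest consistent subset, and by
  at most \<open>k\<close>: a consistent subset of \<open>D \<union> E\<close> restricts to a consistent subset of \<open>D\<close>.
  Writing \<open>c \<le> c' \<le> c + k\<close> for the two maximal sizes, both bounds are then elementary
  estimates of \<open>(n - c)/n\<close> against \<open>(n + k - c')/(n + k)\<close>, with \<open>k = \<epsilon> n\<close>.\<close>

lemma satisfies_subset: "satisfies T \<Sigma> \<Longrightarrow> S \<subseteq> T \<Longrightarrow> satisfies S \<Sigma>"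
  unfolding satisfies_def violates_def by fast

lemma satisfies_empty: "\<forall>\<sigma> \<in> \<Sigma>. is_dc \<sigma> \<Longrightarrow> satisfies {} \<Sigma>"
  unfolding satisfies_def violates_def is_dc_def
  by (metis (no_types, lifting) case_prodE empty_iff list.set_sel(1))

definition max_consistent_card :: "'v::linorder atom set \<Rightarrow> 'v dc set \<Rightarrow> nat" where
  "max_consistent_card D \<Sigma> = Max (card ` {S. S \<subseteq> D \<and> satisfies S \<Sigma>})"

context
  fixes D :: "'v::linorder atom set" and \<Sigma> :: "'v dc set"
  assumes finite_D: "finite D" and empty_consistent: "satisfies {} \<Sigma>"
begin

lemma finite_consistent_subsets: "finite {S. S \<subseteq> D \<and> satisfies S \<Sigma>}"
  by (rule finite_subset[of _ "Pow D"]) (auto simp: finite_D)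

lemma card_consistent_le_max_consistent_card:
  "S \<subseteq> D \<Longrightarrow> satisfies S \<Sigma> \<Longrightarrow> card S \<le> max_consistent_card D \<Sigma>"
  unfolding max_consistent_card_def using finite_consistent_subsets by (intro Max_ge) auto

lemma obtain_max_consistent_subset:
  obtains S where "S \<subseteq> D" "satisfies S \<Sigma>" "card S = max_consistent_card D \<Sigma>"
proof -
  have "max_consistent_card D \<Sigma> \<in> card ` {S. S \<subseteq> D \<and> satisfies S \<Sigma>}"
    unfolding max_consistent_card_def
  proof (rule Max_in)
    show "finite (card ` {S. S \<subseteq> D \<and> satisfies S \<Sigma>})"
      using finite_consistent_subsets by (rule finite_imageI)
    show "card ` {S. S \<subseteq> D \<and> satisfies S \<Sigma>} \<noteq> {}"
      using empty_consistent by auto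
  qed
  then show ?thesis using that by auto
qed

lemma max_consistent_card_le_card: "max_consistent_card D \<Sigma> \<le> card D"
  by (metis obtain_max_consistent_subset card_mono finite_D)

lemma max_consistent_subset_in_Crep:
  assumes "S \<subseteq> D" "satisfies S \<Sigma>" "card S = max_consistent_card D \<Sigma>"
  shows "S \<in> Crep D \<Sigma>"
proof -
  have "\<not> satisfies T \<Sigma>" if "S \<subset> T" "T \<subseteq> D" for T
  proof
    assume "satisfies T \<Sigma>"
    then have "card T \<le> card S"
      using card_consistent_le_max_consistent_card \<open>T \<subseteq> D\<close> assms(3) by simp
    moreover have "card S < card T"
      using that finite_D by (meson psubset_card_mono finite_subset)
    ultimately show False by simp
  qed
  then show ?thesis
    using assms card_consistent_le_max_consistent_card
    by (auto simp: Crep_def is_srepair_def)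
qed

lemma Max_card_Crep: "Max (card ` Crep D \<Sigma>) = max_consistent_card D \<Sigma>"
proof (rule Max_eqI)
  show "finite (card ` Crep D \<Sigma>)"
    by (rule finite_imageI, rule finite_subset[of _ "Pow D"])
       (auto simp: Crep_def is_srepair_def finite_D)
  show "n \<le> max_consistent_card D \<Sigma>" if "n \<in> card ` Crep D \<Sigma>" for n
    using that card_consistent_le_max_consistent_card
    by (auto simp: Crep_def is_srepair_def)
  obtain S where "S \<subseteq> D" "satisfies S \<Sigma>" "card S = max_consistent_card D \<Sigma>"
    by (rule obtain_max_consistent_subset)
  then have "S \<in> Crep D \<Sigma>"
    by (rule max_consistent_subset_in_Crep)
  then show "max_consistent_card D \<Sigma> \<in> card ` Crep D \<Sigma>"
    using \<open>card S = max_consistent_card D \<Sigma>\<close> by (metis image_eqI)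
qed

lemma inc_deg_c_g3_eq:
  "inc_deg_c_g3 D \<Sigma> = (card D - real (max_consistent_card D \<Sigma>)) / card D"
  by (simp add: inc_deg_c_g3_def Max_card_Crep)

lemma inc_deg_c_g3_nonneg: "inc_deg_c_g3 D \<Sigma> \<ge> 0"
  using max_consistent_card_le_card by (simp add: inc_deg_c_g3_eq)

end

lemma max_consistent_card_mono:
  assumes "finite E" "satisfies {} \<Sigma>" "D \<subseteq> E"
  shows "max_consistent_card D \<Sigma> \<le> max_consistent_card E \<Sigma>"
proof -
  have "finite D" using assms finite_subset by blast
  then obtain S where S: "S \<subseteq> D" "satisfies S \<Sigma>" "card S = max_consistent_card D \<Sigma>"
    using assms(2) obtain_max_consistent_subset by blast
  have "card S \<le> max_consistent_card E \<Sigma>"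
    using S(1,2) assms(3) by (intro card_consistent_le_max_consistent_card[OF assms(1,2)]) auto
  then show ?thesis using S(3) by simp
qed

lemma max_consistent_card_Un_le:
  assumes "finite D" "finite E" "satisfies {} \<Sigma>"
  shows "max_consistent_card (D \<union> E) \<Sigma> \<le> max_consistent_card D \<Sigma> + card E"
proof -
  obtain S where S: "S \<subseteq> D \<union> E" "satisfies S \<Sigma>"
    "card S = max_consistent_card (D \<union> E) \<Sigma>"
    using assms obtain_max_consistent_subset[of "D \<union> E"] by blast
  have "card S \<le> card ((S \<inter> D) \<union> E)"
    using S(1) assms by (intro card_mono) auto
  moreover have "card ((S \<inter> D) \<union> E) \<le> card (S \<inter> D) + card E"
    by (rule card_Un_le)
  moreover have "card (S \<inter> D) \<le> max_consistent_card D \<Sigma>"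
    using card_consistent_le_max_consistent_card[OF assms(1,3) Int_lower2 satisfies_subset[OF S(2) Int_lower1]] .
  ultimately show ?thesis using S(3) by linarith
qed

lemma inc_deg_c_g3_Un_le:
  assumes "finite D" "D \<noteq> {}" "finite E" "D \<inter> E = {}" "satisfies {} \<Sigma>"
  shows "inc_deg_c_g3 (D \<union> E) \<Sigma> \<le> inc_deg_c_g3 D \<Sigma> + card E / card (D \<union> E)"
proof -
  define n k c c' where "n = real (card D)" and "k = real (card E)"
    and "c = real (max_consistent_card D \<Sigma>)"
    and "c' = real (max_consistent_card (D \<union> E) \<Sigma>)"
  have n: "n > 0" using assms(1,2) by (simp add: n_def card_gt_0_iff)
  have card_Un: "real (card (D \<union> E)) = n + k"
    using assms by (simp add: n_def k_def card_Un_disjoint)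
  have "c \<le> c'" "c \<le> n"
    using assms max_consistent_card_mono[of "D \<union> E" \<Sigma> D] max_consistent_card_le_card[of D \<Sigma>]
    by (auto simp: c_def c'_def n_def)
  have "inc_deg_c_g3 (D \<union> E) \<Sigma> = (n - c') / (n + k) + k / (n + k)"
    using assms by (simp add: inc_deg_c_g3_eq card_Un c'_def add_divide_distrib[symmetric])
  also have "(n - c') / (n + k) \<le> (n - c) / (n + k)"
    using \<open>c \<le> c'\<close> n by (intro divide_right_mono) (auto simp: k_def)
  also have "(n - c) / (n + k) \<le> (n - c) / n"
    using \<open>c \<le> n\<close> n by (intro divide_left_mono) (auto simp: k_def)
  also have "(n - c) / n = inc_deg_c_g3 D \<Sigma>"
    using assms by (simp add: inc_deg_c_g3_eq n_def c_def)
  finally show ?thesis by (simp add: card_Un k_def)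
qed

lemma inc_deg_c_g3_le_Un:
  assumes "finite D" "D \<noteq> {}" "finite E" "D \<inter> E = {}" "satisfies {} \<Sigma>"
  shows "inc_deg_c_g3 D \<Sigma> \<le> card (D \<union> E) / card D * inc_deg_c_g3 (D \<union> E) \<Sigma>"
proof -
  define n k c c' where "n = real (card D)" and "k = real (card E)"
    and "c = real (max_consistent_card D \<Sigma>)"
    and "c' = real (max_consistent_card (D \<union> E) \<Sigma>)"
  have n: "n > 0" using assms(1,2) by (simp add: n_def card_gt_0_iff)
  have card_Un: "real (card (D \<union> E)) = n + k"
    using assms by (simp add: n_def k_def card_Un_disjoint)
  have "c' \<le> c + k"
    using max_consistent_card_Un_le[OF assms(1,3,5)] by (simp add: c_def c'_def k_def)
  have "inc_deg_c_g3 D \<Sigma> = (n - c) / n"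
    using assms by (simp add: inc_deg_c_g3_eq n_def c_def)
  also have "\<dots> \<le> (n + k - c') / n"
    using \<open>c' \<le> c + k\<close> n by (intro divide_right_mono) auto
  also have "\<dots> = (n + k) / n * ((n + k - c') / (n + k))"
    using n by (simp add: k_def)
  also have "(n + k - c') / (n + k) = inc_deg_c_g3 (D \<union> E) \<Sigma>"
    using assms by (simp add: inc_deg_c_g3_eq card_Un c'_def)
  finally show ?thesis by (simp add: card_Un n_def)
qed

theorem proposition2:
  fixes \<Sigma> :: "'v::linorder dc set" and D Dk :: "'v atom set" and \<epsilon> :: real
  assumes "finite \<Sigma>" and "\<forall>\<sigma> \<in> \<Sigma>. is_dc \<sigma>"
    and "finite D" and "D \<noteq> {}"
    and "0 < \<epsilon>" and "\<epsilon> < 1"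
    and "\<epsilon> * real (card D) \<in> \<int>"
    and "finite Dk" and "real (card Dk) = \<epsilon> * real (card D)"
    and "Dk \<inter> D = {}"
  shows "inc_deg_c_g3 (D \<union> Dk) \<Sigma> \<le> inc_deg_c_g3 D \<Sigma> + 1 / (1 + 1 / \<epsilon>)
       \<and> inc_deg_c_g3 D \<Sigma> \<le> (1 / (1 - \<epsilon>)) * inc_deg_c_g3 (D \<union> Dk) \<Sigma>"
proof -
  have cons: "satisfies {} \<Sigma>" using assms(2) by (rule satisfies_empty)
  have disj: "D \<inter> Dk = {}" using assms(10) by blast
  have n: "real (card D) > 0" using assms(3,4) by (simp add: card_gt_0_iff)
  have card_Un: "real (card (D \<union> Dk)) = (1 + \<epsilon>) * card D"
    using assms(3,8,9) disj by (simp add: card_Un_disjoint algebra_simps)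
  have "card Dk / card (D \<union> Dk) = 1 / (1 + 1 / \<epsilon>)"
    using assms(5,9) n card_Un by (simp add: field_simps)
  then have first: "inc_deg_c_g3 (D \<union> Dk) \<Sigma> \<le> inc_deg_c_g3 D \<Sigma> + 1 / (1 + 1 / \<epsilon>)"
    using inc_deg_c_g3_Un_le[OF assms(3,4,8) disj cons] by simp
  have "1 + \<epsilon> \<le> 1 / (1 - \<epsilon>)"
    using assms(5,6) by (simp add: field_simps)
  moreover have "inc_deg_c_g3 (D \<union> Dk) \<Sigma> \<ge> 0"
    using assms(3,8) cons by (intro inc_deg_c_g3_nonneg) auto
  ultimately have "(1 + \<epsilon>) * inc_deg_c_g3 (D \<union> Dk) \<Sigma> \<le> 1 / (1 - \<epsilon>) * inc_deg_c_g3 (D \<union> Dk) \<Sigma>"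
    by (rule mult_right_mono)
  moreover have "inc_deg_c_g3 D \<Sigma> \<le> (1 + \<epsilon>) * inc_deg_c_g3 (D \<union> Dk) \<Sigma>"
    using inc_deg_c_g3_le_Un[OF assms(3,4,8) disj cons] card_Un n by simp
  ultimately show ?thesis using first by linarith
qed

end
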